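(* For any boolean function $f:\{0,1\}^n\to\{0,1\}$, \[ Q_E^{na}(f)=\min_{x\in\{0,1\}^n}\max_{y\in S_f^\perp} d(x,y), \] i.e.\ $Q_E^{na}(f)$ equals the covering radius of the binary linear code $S_f^\perp$.
   Context: Addition of bit strings is in $\mathbb Z_2^n$ (bitwise mod 2). $S_f:=\{z\in\{0,1\}^n: f(x)=f(x+z)\ \text{for all } x\}$, a subspace of $\mathbb F_2^n$. For a subspace $S$, $S^\perp=\{x: x\cdot s=0 \text{ for all } s\in S\}$, with $x\cdot s=\sum_i x_is_i \bmod 2$. $d(x,y)$ is the Hamming distance. Nonadaptive exact quantum query model: let $\mathcal H_{\rm in}$ have orthonormal basis $|0\rangle,\dots,|n\rangle$ and let the oracle $O_x$ act by $|i\rangle\mapsto(-1)^{x_i}|i\rangle$ with convention $x_0=0$. A nonadaptive quantum algorithm making $k$ queries consists of an input-independent state $|\psi\rangle\in\mathcal H_{\rm in}^{\otimes k}\otimes\mathcal H_{\rm work}$ (with $\mathcal H_{\rm work}$ a finite-dimensional workspace), to which $O_x^{\otimes k}\otimes I$ is applied, followed by an input-independent two-outcome measurement with outcomes labelled $0,1$. It computes $f$ exactly if for every $x$ the outcome is $f(x)$ with probability $1$. $Q_E^{na}(f)$ is the minimum such $k$. *)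

theory Defs
  imports Complex_Main
begin

(* Bit strings of length n are bool lists of length n; bit i (1-based) of x is x ! (i-1). *)

definition xor_bits :: "bool list \<Rightarrow> bool list \<Rightarrow> bool list" where
  "xor_bits x z = map2 (\<noteq>) x z"

definition dot_bits :: "bool list \<Rightarrow> bool list \<Rightarrow> bool" where
  "dot_bits x s = odd (card {i. i < length x \<and> x ! i \<and> s ! i})"

definition hamming :: "bool list \<Rightarrow> bool list \<Rightarrow> nat" where
  "hamming x y = card {i. i < length x \<and> x ! i \<noteq> y ! i}"

definition bitstrings :: "nat \<Rightarrow> bool list set" where
  "bitstrings n = {x. length x = n}"

definition S_f :: "nat \<Rightarrow> (bool list \<Rightarrow> bool) \<Rightarrow> bool list set" where
  "S_f n f = {z \<in> bitstrings n. \<forall>x \<in> bitstrings n. f x = f (xor_bits x z)}"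

definition perp :: "nat \<Rightarrow> bool list set \<Rightarrow> bool list set" where
  "perp n S = {x \<in> bitstrings n. \<forall>s \<in> S. \<not> dot_bits x s}"

definition covering_radius :: "nat \<Rightarrow> bool list set \<Rightarrow> nat" where
  "covering_radius n C = Min ((\<lambda>x. Max ((\<lambda>y. hamming x y) ` C)) ` bitstrings n)"

(* Oracle phase on basis state |i>, i \<in> {0..n}, convention x_0 = 0 *)
definition query_sign :: "bool list \<Rightarrow> nat \<Rightarrow> complex" where
  "query_sign x i = (if i = 0 then 1 else if x ! (i - 1) then -1 else 1)"

(* Orthonormal basis of H_in^{\<otimes>k} \<otimes> H_work, dim H_work = m:
   |i_1,...,i_k> \<otimes> |w>, with i_j \<in> {0..n}, w < m *)
definition basis_idx :: "nat \<Rightarrow> nat \<Rightarrow> nat \<Rightarrow> (nat list \<times> nat) set" where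
  "basis_idx n k m = {(is, w). length is = k \<and> (\<forall>i \<in> set is. i \<le> n) \<and> w < m}"

definition cinner :: "'a set \<Rightarrow> ('a \<Rightarrow> complex) \<Rightarrow> ('a \<Rightarrow> complex) \<Rightarrow> complex" where
  "cinner A u v = (\<Sum>j\<in>A. cnj (u j) * v j)"

definition mat_app :: "'a set \<Rightarrow> ('a \<Rightarrow> 'a \<Rightarrow> complex) \<Rightarrow> ('a \<Rightarrow> complex) \<Rightarrow> ('a \<Rightarrow> complex)" where
  "mat_app A E v = (\<lambda>j. \<Sum>l\<in>A. E j l * v l)"

definition psd :: "'a set \<Rightarrow> ('a \<Rightarrow> 'a \<Rightarrow> complex) \<Rightarrow> bool" where
  "psd A E = (\<forall>v. Im (cinner A v (mat_app A E v)) = 0 \<and> Re (cinner A v (mat_app A E v)) \<ge> 0)"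

(* O_x^{\<otimes>k} \<otimes> I applied to \<psi> *)
definition oracle_apply :: "bool list \<Rightarrow> (nat list \<times> nat \<Rightarrow> complex) \<Rightarrow> (nat list \<times> nat \<Rightarrow> complex)" where
  "oracle_apply x \<psi> = (\<lambda>(is, w). (\<Prod>i\<leftarrow>is. query_sign x i) * \<psi> (is, w))"

(* A k-query nonadaptive algorithm computing f exactly exists.  The two-outcome
   measurement is a general POVM {I - E, E}; E is the effect for outcome 1 (= True). *)
definition na_exact_computes :: "nat \<Rightarrow> (bool list \<Rightarrow> bool) \<Rightarrow> nat \<Rightarrow> bool" where
  "na_exact_computes n f k =
    (\<exists>m \<psi> E.
       let A = basis_idx n k m in
       cinner A \<psi> \<psi> = 1 \<and>
       psd A E \<and>
       psd A (\<lambda>j l. (if j = l then 1 else 0) - E j l) \<and>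
       (\<forall>x \<in> bitstrings n.
          cinner A (oracle_apply x \<psi>) (mat_app A E (oracle_apply x \<psi>)) = (if f x then 1 else 0)))"

definition QE_na :: "nat \<Rightarrow> (bool list \<Rightarrow> bool) \<Rightarrow> nat" where
  "QE_na n f = (LEAST k. na_exact_computes n f k)"

end

theory Submission
  imports Defs
begin

(* Bit strings of length n are identified with subsets of {..<n} via their support;
   XOR becomes symmetric difference and the characters of this group are
   chi A B = (-1)^|A \<inter> B|.

   Lower bound: after k queries, the state O_x psi splits into basis states labelled by
   a query list whose parity set (coordinates queried an odd number of times) has at
   most k elements.  The inner products <O_x psi, O_y psi> are the Fourier transform of
   the resulting weight distribution on parity sets; exactness forces that transform to
   vanish outside the period group S_f, so the distribution is invariant under
   translation by the dual code.  Any parity set of positive weight is therefore a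
   centre within distance k of every codeword.

   Upper bound: for a centre Y0 of radius r, query the sets Y0 \<oplus> c (c in the dual
   code) in uniform superposition.  The resulting states are orthogonal unless
   x \<oplus> y lies in S_f, and form a tight frame, so the effect
   (1/|S_f|) * sum over f x = 1 of |O_x psi><O_x psi| is a valid exact measurement. *)

section \<open>Bit strings as subsets of the index set\<close>

definition supp :: "bool list \<Rightarrow> nat set" where
  "supp x = {i. i < length x \<and> x ! i}"

definition bits_of :: "nat \<Rightarrow> nat set \<Rightarrow> bool list" where
  "bits_of n X = map (\<lambda>i. i \<in> X) [0..<n]"

lemma supp_subset: "x \<in> bitstrings n \<Longrightarrow> supp x \<subseteq> {..<n}"
  by (auto simp: supp_def bitstrings_def)

lemma finite_supp [simp]: "finite (supp x)"
  by (simp add: supp_def)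

lemma bits_of_supp: "length x = n \<Longrightarrow> bits_of n (supp x) = x"
  by (auto simp: bits_of_def supp_def intro!: nth_equalityI)

lemma supp_bits_of: "X \<subseteq> {..<n} \<Longrightarrow> supp (bits_of n X) = X"
  by (auto simp: bits_of_def supp_def)

lemma length_bits_of [simp]: "length (bits_of n X) = n"
  by (simp add: bits_of_def)

lemma bits_of_in_bitstrings [simp]: "bits_of n X \<in> bitstrings n"
  by (simp add: bitstrings_def)

lemma bij_betw_supp: "bij_betw supp (bitstrings n) (Pow {..<n})"
proof (rule bij_betw_byWitness[where f' = "bits_of n"])
  show "supp ` bitstrings n \<subseteq> Pow {..<n}"
    using supp_subset by blast
qed (auto simp: bits_of_supp supp_bits_of bitstrings_def)

lemma supp_inj: "inj_on supp (bitstrings n)"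
  using bij_betw_supp bij_betw_def by blast

lemma finite_bitstrings [simp]: "finite (bitstrings n)"
  using bij_betw_finite[OF bij_betw_supp] by simp

lemma sum_bitstrings: "(\<Sum>x\<in>bitstrings n. g (supp x)) = (\<Sum>X\<in>Pow {..<n}. g X)"
  using sum.reindex_bij_betw[OF bij_betw_supp] .

lemma supp_xor:
  "length x = length z \<Longrightarrow> supp (xor_bits x z) = sym_diff (supp x) (supp z)"
  by (auto simp: supp_def xor_bits_def)

lemma length_xor_bits [simp]: "length (xor_bits x z) = min (length x) (length z)"
  by (simp add: xor_bits_def)

lemma xor_in_bitstrings [simp]:
  "x \<in> bitstrings n \<Longrightarrow> z \<in> bitstrings n \<Longrightarrow> xor_bits x z \<in> bitstrings n"
  by (simp add: xor_bits_def bitstrings_def)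

lemma hamming_supp: "length x = length y \<Longrightarrow> hamming x y = card (sym_diff (supp x) (supp y))"
  unfolding hamming_def supp_def by (rule arg_cong[where f = card]) auto

definition chi :: "nat set \<Rightarrow> nat set \<Rightarrow> real" where
  "chi A B = (-1) ^ card (A \<inter> B)"

lemma chi_comm: "chi A B = chi B A"
  by (simp add: chi_def Int_commute)

lemma chi_empty [simp]: "chi A {} = 1" "chi {} A = 1"
  by (simp_all add: chi_def)

lemma chi_cases: "chi A B = 1 \<or> chi A B = -1"
  by (simp add: chi_def minus_one_power_iff)

lemma chi_square [simp]: "chi A B * chi A B = 1"
  by (simp add: chi_def flip: power_add)

lemma dot_bits_chi: "length x = length s \<Longrightarrow> \<not> dot_bits x s \<longleftrightarrow> chi (supp x) (supp s) = 1"
proof -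
  assume "length x = length s"
  then have "{i. i < length x \<and> x ! i \<and> s ! i} = supp x \<inter> supp s"
    by (auto simp: supp_def)
  then show ?thesis
    by (simp add: dot_bits_def chi_def minus_one_power_iff)
qed

lemma minus_one_power_card_sym_diff:
  assumes "finite P" "finite Q"
  shows "(-1::real) ^ card (sym_diff P Q) = (-1) ^ card P * (-1) ^ card Q"
proof -
  have "card P = card (P - Q) + card (P \<inter> Q)" "card Q = card (Q - P) + card (P \<inter> Q)"
    using assms card_Int_Diff[of P Q] card_Int_Diff[of Q P] by (simp_all add: Int_commute)
  moreover have "card (sym_diff P Q) = card (P - Q) + card (Q - P)"
    using assms by (intro card_Un_disjoint) auto
  ultimately show ?thesis
    by (simp add: power_add power_mult_distrib flip: power_mult)
qed

lemma chi_sym_diff: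
  assumes "finite B" "finite C"
  shows "chi A (sym_diff B C) = chi A B * chi A C"
proof -
  have "A \<inter> sym_diff B C = sym_diff (A \<inter> B) (A \<inter> C)"
    by auto
  then show ?thesis
    using assms by (simp add: chi_def minus_one_power_card_sym_diff)
qed

lemma chi_sym_diff_left: "finite B \<Longrightarrow> finite C \<Longrightarrow> chi (sym_diff B C) A = chi B A * chi C A"
  by (simp add: chi_comm chi_sym_diff)

section \<open>Subgroups, dual subgroups and character sums\<close>

definition sd_subgroup :: "nat set \<Rightarrow> nat set set \<Rightarrow> bool" where
  "sd_subgroup N G \<longleftrightarrow> G \<subseteq> Pow N \<and> {} \<in> G \<and> (\<forall>A\<in>G. \<forall>B\<in>G. sym_diff A B \<in> G)"

definition dual :: "nat set \<Rightarrow> nat set set \<Rightarrow> nat set set" where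
  "dual N G = {Y \<in> Pow N. \<forall>W\<in>G. chi W Y = 1}"

lemma sd_subgroup_Pow: "sd_subgroup N (Pow N)"
  by (auto simp: sd_subgroup_def)

lemma character_sum:
  assumes "finite N" "sd_subgroup N G"
  shows "(\<Sum>W\<in>G. chi W Y) = (if \<forall>W\<in>G. chi W Y = 1 then real (card G) else 0)"
proof (cases "\<forall>W\<in>G. chi W Y = 1")
  case True
  then show ?thesis by simp
next
  case False
  then obtain W0 where W0: "W0 \<in> G" "chi W0 Y = -1"
    using chi_cases by blast
  have G: "G \<subseteq> Pow N" "\<forall>A\<in>G. \<forall>B\<in>G. sym_diff A B \<in> G"
    using assms(2) by (auto simp: sd_subgroup_def)
  then have fin: "finite W" if "W \<in> G" for W
    using assms(1) that G(1) by (meson PowD finite_subset subsetD)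
  have shift: "sym_diff (sym_diff W W0) W0 = W" for W :: "nat set"
    by auto
  have "(\<Sum>W\<in>G. chi W Y) = (\<Sum>W\<in>G. chi (sym_diff W W0) Y)"
    by (rule sum.reindex_bij_witness[of _ "\<lambda>W. sym_diff W W0" "\<lambda>W. sym_diff W W0"])
       (use G W0 shift in simp_all)
  also have "\<dots> = - (\<Sum>W\<in>G. chi W Y)"
    using W0 fin by (simp add: chi_sym_diff_left sum_negf)
  finally have "(\<Sum>W\<in>G. chi W Y) = 0"
    by simp
  then show ?thesis
    using False by (simp only: if_False)
qed

lemma character_sum_Pow:
  assumes "finite N" "Y \<subseteq> N"
  shows "(\<Sum>Z\<in>Pow N. chi Z Y) = (if Y = {} then 2 ^ card N else 0)"
proof -
  have "(\<forall>Z\<in>Pow N. chi Z Y = 1) \<longleftrightarrow> Y = {}"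
  proof
    assume trivial: "\<forall>Z\<in>Pow N. chi Z Y = 1"
    show "Y = {}"
    proof (rule ccontr)
      assume "Y \<noteq> {}"
      then obtain a where "a \<in> Y" by blast
      then have "{a} \<in> Pow N" "chi {a} Y = -1"
        using assms(2) by (auto simp: chi_def)
      then show False
        using trivial by fastforce
    qed
  qed simp
  then show ?thesis
    using character_sum[OF assms(1) sd_subgroup_Pow, of Y] assms(1) by (simp add: card_Pow)
qed

lemma character_orthogonality:
  assumes "finite N" "A \<subseteq> N" "B \<subseteq> N"
  shows "(\<Sum>Z\<in>Pow N. chi Z A * chi Z B) = (if A = B then 2 ^ card N else 0)"
proof -
  have "finite A" "finite B"
    using assms rev_finite_subset by metis+
  then have "(\<Sum>Z\<in>Pow N. chi Z A * chi Z B) = (\<Sum>Z\<in>Pow N. chi Z (sym_diff A B))"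
    by (simp add: chi_sym_diff)
  also have "\<dots> = (if A = B then 2 ^ card N else 0)"
    using assms by (subst character_sum_Pow) auto
  finally show ?thesis .
qed

lemma dual_subgroup:
  assumes "finite N"
  shows "sd_subgroup N (dual N G)"
proof -
  have "chi W (sym_diff A B) = 1" if "A \<subseteq> N" "B \<subseteq> N" "chi W A = 1" "chi W B = 1" for W A B
    using that assms by (simp add: chi_sym_diff rev_finite_subset)
  then show ?thesis
    by (auto simp: sd_subgroup_def dual_def)
qed

(* |G| * |dual G| = 2^|N|, by summing all characters over G in two ways. *)
lemma card_subgroup_dual:
  assumes "finite N" "sd_subgroup N G"
  shows "card G * card (dual N G) = 2 ^ card N"
proof -
  have G: "G \<subseteq> Pow N" "{} \<in> G"
    using assms(2) by (auto simp: sd_subgroup_def)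
  have "finite G"
    using G(1) assms(1) by (simp add: finite_subset)
  have "(\<Sum>Y\<in>Pow N. \<Sum>W\<in>G. chi W Y) = (\<Sum>Y\<in>Pow N. if Y \<in> dual N G then real (card G) else 0)"
    using character_sum[OF assms] by (simp add: dual_def)
  also have "\<dots> = real (card G * card (dual N G))"
    using assms(1) by (simp add: sum.If_cases dual_def Int_absorb1 Collect_conj_eq Pow_def)
  finally have lhs: "(\<Sum>Y\<in>Pow N. \<Sum>W\<in>G. chi W Y) = real (card G * card (dual N G))" .
  have "(\<Sum>Y\<in>Pow N. \<Sum>W\<in>G. chi W Y) = (\<Sum>W\<in>G. \<Sum>Y\<in>Pow N. chi Y W)"
    by (subst sum.swap) (simp add: chi_comm)
  also have "\<dots> = (\<Sum>W\<in>G. if W = {} then 2 ^ card N else 0)"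
    using G(1) assms(1) by (intro sum.cong refl character_sum_Pow) auto
  also have "\<dots> = 2 ^ card N"
    using \<open>finite G\<close> G(2) by simp
  finally have "real (card G * card (dual N G)) = real (2 ^ card N)"
    using lhs by simp
  then show ?thesis
    by (simp only: of_nat_eq_iff)
qed

(* Biduality: G is contained in its double dual, which has the same size. *)
lemma dual_dual:
  assumes "finite N" "sd_subgroup N G"
  shows "dual N (dual N G) = G"
proof (rule card_seteq[symmetric])
  show "finite (dual N (dual N G))"
    using assms(1) by (simp add: dual_def)
  show "G \<subseteq> dual N (dual N G)"
    using assms(2) by (auto simp: dual_def sd_subgroup_def chi_comm)
  have "card G * card (dual N G) = card (dual N (dual N G)) * card (dual N G)"
    using card_subgroup_dual[OF assms] card_subgroup_dual[OF assms(1) dual_subgroup[OF assms(1)]]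
    by (simp add: mult.commute)
  moreover have "card (dual N G) > 0"
    using dual_subgroup[OF assms(1)] assms(1)
    by (auto simp: sd_subgroup_def card_gt_0_iff dual_def)
  ultimately show "card (dual N (dual N G)) \<le> card G"
    by simp
qed

section \<open>Fourier analysis on subsets\<close>

lemma fourier_inversion:
  fixes \<mu> :: "nat set \<Rightarrow> real"
  assumes "finite N" "Y \<subseteq> N"
  shows "(\<Sum>Z\<in>Pow N. (\<Sum>Y'\<in>Pow N. \<mu> Y' * chi Z Y') * chi Z Y) = 2 ^ card N * \<mu> Y"
proof -
  have "(\<Sum>Z\<in>Pow N. (\<Sum>Y'\<in>Pow N. \<mu> Y' * chi Z Y') * chi Z Y)
      = (\<Sum>Y'\<in>Pow N. \<mu> Y' * (\<Sum>Z\<in>Pow N. chi Z Y' * chi Z Y))"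
    unfolding sum_distrib_left sum_distrib_right mult.assoc by (rule sum.swap)
  also have "\<dots> = (\<Sum>Y'\<in>Pow N. \<mu> Y' * (if Y' = Y then 2 ^ card N else 0))"
    using assms by (intro sum.cong refl) (simp add: character_orthogonality)
  also have "\<dots> = 2 ^ card N * \<mu> Y"
    using assms by (simp add: if_distrib[of "\<lambda>t. \<mu> _ * t"] cong: if_cong)
  finally show ?thesis .
qed

lemma invariant_under_dual:
  fixes \<mu> :: "nat set \<Rightarrow> real"
  assumes "finite N" "Y \<subseteq> N" "c \<in> dual N G"
    and spectrum: "\<And>Z. Z \<subseteq> N \<Longrightarrow> Z \<notin> G \<Longrightarrow> (\<Sum>Y\<in>Pow N. \<mu> Y * chi Z Y) = 0"
  shows "\<mu> (sym_diff Y c) = \<mu> Y"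
proof -
  define \<mu>' where "\<mu>' Z = (\<Sum>Y\<in>Pow N. \<mu> Y * chi Z Y)" for Z
  have c: "c \<subseteq> N" "\<forall>W\<in>G. chi W c = 1"
    using assms(3) by (auto simp: dual_def)
  have "\<mu>' Z * chi Z (sym_diff Y c) = \<mu>' Z * chi Z Y" if "Z \<subseteq> N" for Z
  proof (cases "Z \<in> G")
    case True
    then show ?thesis
      using c assms(1,2) by (simp add: chi_sym_diff rev_finite_subset)
  next
    case False
    then show ?thesis
      using spectrum that by (simp add: \<mu>'_def)
  qed
  then have "(\<Sum>Z\<in>Pow N. \<mu>' Z * chi Z (sym_diff Y c)) = (\<Sum>Z\<in>Pow N. \<mu>' Z * chi Z Y)"
    by (intro sum.cong) auto
  moreover have "sym_diff Y c \<subseteq> N"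
    using assms(2) c(1) by blast
  ultimately have "2 ^ card N * \<mu> (sym_diff Y c) = 2 ^ card N * \<mu> Y"
    using fourier_inversion[OF assms(1), of _ \<mu>] assms(2) by (simp add: \<mu>'_def)
  then show ?thesis
    by simp
qed

(* Parseval: characters with distinct indices are orthogonal, so the map from
   coefficients to the character combination scales norms by 2^|N|. *)
lemma parseval:
  fixes a :: "'c \<Rightarrow> complex"
  assumes "finite N" "finite C" "inj_on D C" "\<And>c. c \<in> C \<Longrightarrow> D c \<subseteq> N"
  shows "(\<Sum>X\<in>Pow N. (cmod (\<Sum>c\<in>C. of_real (chi X (D c)) * a c))\<^sup>2)
       = 2 ^ card N * (\<Sum>c\<in>C. (cmod (a c))\<^sup>2)"
proof -
  define s where "s X = (\<Sum>c\<in>C. of_real (chi X (D c)) * a c)" for X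
  have "complex_of_real (\<Sum>X\<in>Pow N. (cmod (s X))\<^sup>2) = (\<Sum>X\<in>Pow N. s X * cnj (s X))"
    by (simp only: of_real_sum complex_norm_square)
  also have "\<dots> = (\<Sum>X\<in>Pow N. \<Sum>c\<in>C. \<Sum>c'\<in>C. of_real (chi X (D c) * chi X (D c')) * (a c * cnj (a c')))"
    by (simp add: s_def sum_product mult_ac)
  also have "\<dots> = (\<Sum>c\<in>C. \<Sum>c'\<in>C. \<Sum>X\<in>Pow N. of_real (chi X (D c) * chi X (D c')) * (a c * cnj (a c')))"
    by (subst sum.swap) (simp only: sum.swap[of _ "Pow N"])
  also have "\<dots> = (\<Sum>c\<in>C. \<Sum>c'\<in>C. of_real (\<Sum>X\<in>Pow N. chi X (D c) * chi X (D c')) * (a c * cnj (a c')))"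
    by (simp only: sum_distrib_right of_real_sum)
  also have "\<dots> = (\<Sum>c\<in>C. \<Sum>c'\<in>C. if c = c' then of_real (2 ^ card N) * (a c * cnj (a c)) else 0)"
  proof (intro sum.cong refl)
    fix c c' assume "c \<in> C" "c' \<in> C"
    then have "D c = D c' \<longleftrightarrow> c = c'"
      using assms(3) by (auto dest: inj_onD)
    then show "of_real (\<Sum>X\<in>Pow N. chi X (D c) * chi X (D c')) * (a c * cnj (a c'))
        = (if c = c' then of_real (2 ^ card N) * (a c * cnj (a c)) else 0)"
      using assms(1,4) \<open>c \<in> C\<close> \<open>c' \<in> C\<close> by (simp add: character_orthogonality)
  qed
  also have "\<dots> = (\<Sum>c\<in>C. of_real (2 ^ card N) * (a c * cnj (a c)))"
    using assms(2) by simp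
  also have "\<dots> = complex_of_real (2 ^ card N * (\<Sum>c\<in>C. (cmod (a c))\<^sup>2))"
    by (simp only: complex_norm_square of_real_mult of_real_sum sum_distrib_left)
  finally show ?thesis
    by (simp only: of_real_eq_iff s_def)
qed

section \<open>The period group of f and its dual code\<close>

lemma zeros_in_bitstrings: "replicate n False \<in> bitstrings n"
  by (simp add: bitstrings_def)

lemma supp_zeros [simp]: "supp (replicate n False) = {}"
  by (simp add: supp_def)

lemma S_f_subset: "S_f n f \<subseteq> bitstrings n"
  by (auto simp: S_f_def)

lemma perp_subset: "perp n S \<subseteq> bitstrings n"
  by (auto simp: perp_def)

lemma zeros_in_perp: "replicate n False \<in> perp n S"
proof -
  have no_common_bits: "{i. i < n \<and> replicate n False ! i \<and> s ! i} = {}" for s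
    by auto
  have "\<not> dot_bits (replicate n False) s" for s
    unfolding dot_bits_def length_replicate no_common_bits by simp
  then show ?thesis
    by (simp add: perp_def zeros_in_bitstrings)
qed

lemma supp_in_supp_image:
  "S \<subseteq> bitstrings n \<Longrightarrow> z \<in> bitstrings n \<Longrightarrow> supp z \<in> supp ` S \<longleftrightarrow> z \<in> S"
  using supp_inj[of n] by (auto dest: inj_onD)

lemma f_invariant:
  assumes "x \<in> bitstrings n" "y \<in> bitstrings n" "xor_bits x y \<in> S_f n f"
  shows "f x = f y"
proof -
  have "xor_bits x (xor_bits x y) = y"
    using assms(1,2) by (auto simp: xor_bits_def bitstrings_def intro!: nth_equalityI)
  then show ?thesis
    using assms by (auto simp: S_f_def)
qed

lemma zeros_in_S_f: "replicate n False \<in> S_f n f"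
proof -
  have "xor_bits x (replicate n False) = x" if "x \<in> bitstrings n" for x
    using that by (auto simp: bitstrings_def xor_bits_def intro!: nth_equalityI)
  then show ?thesis
    using zeros_in_bitstrings[of n] by (simp add: S_f_def)
qed

lemma S_f_xor_closed:
  assumes "a \<in> S_f n f" "b \<in> S_f n f"
  shows "xor_bits a b \<in> S_f n f"
proof -
  have ab: "a \<in> bitstrings n" "b \<in> bitstrings n"
    using assms by (auto simp: S_f_def)
  have "f x = f (xor_bits x (xor_bits a b))" if x: "x \<in> bitstrings n" for x
  proof -
    have "f x = f (xor_bits x a)"
      using assms(1) x by (simp add: S_f_def)
    also have "\<dots> = f (xor_bits (xor_bits x a) b)"
      using assms(2) x ab(1) by (simp add: S_f_def)
    also have "xor_bits (xor_bits x a) b = xor_bits x (xor_bits a b)"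
      using x ab by (auto simp: xor_bits_def bitstrings_def intro!: nth_equalityI)
    finally show ?thesis .
  qed
  then show ?thesis
    using ab by (simp add: S_f_def)
qed

definition period_group :: "nat \<Rightarrow> (bool list \<Rightarrow> bool) \<Rightarrow> nat set set" where
  "period_group n f = supp ` S_f n f"

lemma period_group_subgroup: "sd_subgroup {..<n} (period_group n f)"
  unfolding sd_subgroup_def period_group_def
proof (intro conjI ballI)
  show "supp ` S_f n f \<subseteq> Pow {..<n}"
    using S_f_subset supp_subset by (meson PowI image_subsetI subsetD)
  show "{} \<in> supp ` S_f n f"
    using zeros_in_S_f by (metis image_eqI supp_zeros)
next
  fix A B assume "A \<in> supp ` S_f n f" "B \<in> supp ` S_f n f"
  then obtain a b where ab: "a \<in> S_f n f" "b \<in> S_f n f" "A = supp a" "B = supp b"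
    by blast
  then have "sym_diff A B = supp (xor_bits a b)"
    using S_f_subset[of n f] supp_xor[of a b] by (auto simp: bitstrings_def)
  then show "sym_diff A B \<in> supp ` S_f n f"
    using S_f_xor_closed[OF ab(1,2)] by (metis image_eqI)
qed

lemma non_period_witness:
  assumes "Z \<subseteq> {..<n}" "Z \<notin> period_group n f"
  obtains u v where "u \<in> bitstrings n" "v \<in> bitstrings n" "f u" "\<not> f v"
    "sym_diff (supp v) (supp u) = Z"
proof -
  define z where "z = bits_of n Z"
  have z: "z \<in> bitstrings n" "supp z = Z"
    using assms(1) by (simp_all add: z_def supp_bits_of)
  have "z \<notin> S_f n f"
  proof
    assume "z \<in> S_f n f"
    then have "supp z \<in> supp ` S_f n f"
      by (rule imageI)
    then show False
      using assms(2) z(2) by (simp add: period_group_def)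
  qed
  then have "\<exists>x\<in>bitstrings n. f x \<noteq> f (xor_bits x z)"
    using z(1) by (simp add: S_f_def)
  then obtain x where x: "x \<in> bitstrings n" "f x \<noteq> f (xor_bits x z)"
    by blast
  define y where "y = xor_bits x z"
  have y: "y \<in> bitstrings n" "sym_diff (supp x) (supp y) = Z"
    using x(1) z supp_xor[of x z] by (auto simp: y_def bitstrings_def)
  have "f y \<noteq> f x" "sym_diff (supp y) (supp x) = Z"
    using x(2) y(2) by (auto simp: y_def)
  show ?thesis
  proof (cases "f x")
    case True
    then show ?thesis
      using that[OF x(1) y(1)] \<open>f y \<noteq> f x\<close> \<open>sym_diff (supp y) (supp x) = Z\<close> by simp
  next
    case False
    then show ?thesis
      using that[OF y(1) x(1)] \<open>f y \<noteq> f x\<close> y(2) by simp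
  qed
qed

lemma supp_perp:
  assumes "S \<subseteq> bitstrings n"
  shows "supp ` perp n S = dual {..<n} (supp ` S)"
proof
  show "supp ` perp n S \<subseteq> dual {..<n} (supp ` S)"
  proof
    fix Y assume "Y \<in> supp ` perp n S"
    then obtain c where c: "c \<in> perp n S" "Y = supp c"
      by blast
    have "chi W Y = 1" if "W \<in> supp ` S" for W
    proof -
      obtain s where "s \<in> S" "W = supp s"
        using \<open>W \<in> supp ` S\<close> by blast
      moreover have "length c = length s"
        using c(1) \<open>s \<in> S\<close> assms by (auto simp: perp_def bitstrings_def)
      ultimately show ?thesis
        using c dot_bits_chi[of c s] by (simp add: perp_def chi_comm)
    qed
    moreover have "Y \<subseteq> {..<n}"
      using c supp_subset perp_subset by blast
    ultimately show "Y \<in> dual {..<n} (supp ` S)"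
      by (simp add: dual_def)
  qed
  show "dual {..<n} (supp ` S) \<subseteq> supp ` perp n S"
  proof
    fix Y assume Y: "Y \<in> dual {..<n} (supp ` S)"
    then have "Y \<subseteq> {..<n}"
      by (simp add: dual_def)
    have "\<not> dot_bits (bits_of n Y) s" if "s \<in> S" for s
    proof -
      have "length s = n"
        using that assms by (auto simp: bitstrings_def)
      then show ?thesis
        using Y that \<open>Y \<subseteq> {..<n}\<close> by (simp add: dual_def dot_bits_chi chi_comm supp_bits_of)
    qed
    then have "bits_of n Y \<in> perp n S"
      by (simp add: perp_def)
    then show "Y \<in> supp ` perp n S"
      using supp_bits_of[OF \<open>Y \<subseteq> {..<n}\<close>] by (metis image_eqI)
  qed
qed

lemma card_S_f_perp: "card (S_f n f) * card (perp n (S_f n f)) = 2 ^ n"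
proof -
  have "card (supp ` S_f n f) = card (S_f n f)" "card (supp ` perp n (S_f n f)) = card (perp n (S_f n f))"
    using inj_on_subset[OF supp_inj S_f_subset] inj_on_subset[OF supp_inj perp_subset]
    by (simp_all add: card_image)
  then show ?thesis
    using card_subgroup_dual[OF _ period_group_subgroup, of n f] supp_perp[OF S_f_subset]
    by (simp add: period_group_def)
qed

(* Summing the character of z over the dual code detects whether z is a period;
   this is where biduality is needed. *)
lemma perp_character_sum:
  assumes "z \<in> bitstrings n"
  shows "(\<Sum>c\<in>perp n (S_f n f). chi (supp z) (supp c))
       = (if z \<in> S_f n f then real (card (perp n (S_f n f))) else 0)"
proof -
  let ?C = "perp n (S_f n f)"
  have "inj_on supp ?C"
    using inj_on_subset[OF supp_inj perp_subset] .
  then have "(\<Sum>c\<in>?C. chi (supp z) (supp c)) = (\<Sum>W\<in>supp ` ?C. chi W (supp z))"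
    by (simp add: sum.reindex chi_comm)
  also have "\<dots> = (\<Sum>W\<in>dual {..<n} (period_group n f). chi W (supp z))"
    by (simp add: supp_perp[OF S_f_subset] period_group_def)
  also have "\<dots> = (if supp z \<in> dual {..<n} (dual {..<n} (period_group n f))
                   then real (card (dual {..<n} (period_group n f))) else 0)"
  proof -
    have trivial_iff: "(\<forall>W\<in>dual {..<n} (period_group n f). chi W (supp z) = 1)
        \<longleftrightarrow> supp z \<in> dual {..<n} (dual {..<n} (period_group n f))"
      using supp_subset[OF assms] by (simp add: dual_def chi_comm)
    show ?thesis
      using character_sum[OF finite_lessThan dual_subgroup[OF finite_lessThan]]
      by (simp only: trivial_iff)
  qed
  also have "\<dots> = (if z \<in> S_f n f then real (card ?C) else 0)"
  proof -
    have "card (dual {..<n} (period_group n f)) = card ?C"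
      using supp_perp[OF S_f_subset] card_image[OF \<open>inj_on supp ?C\<close>]
      by (simp add: period_group_def)
    moreover have "supp z \<in> period_group n f \<longleftrightarrow> z \<in> S_f n f"
      using supp_in_supp_image[OF S_f_subset assms] by (simp add: period_group_def)
    ultimately show ?thesis
      by (simp add: dual_dual period_group_subgroup)
  qed
  finally show ?thesis .
qed

lemma card_perp_pos: "card (perp n S) > 0"
proof -
  have "finite (perp n S)"
    by (rule finite_subset[OF perp_subset finite_bitstrings])
  moreover have "perp n S \<noteq> {}"
    using zeros_in_perp by auto
  ultimately show ?thesis
    by (simp add: card_gt_0_iff)
qed

lemma card_S_f_pos: "card (S_f n f) > 0"
  using card_S_f_perp[of n f] by (metis nat_0_less_mult_iff zero_less_numeral zero_less_power)

(* |S_f| = 2^n / |perp n S_f|, the normalisation constant of the upper-bound measurement. *)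
lemma card_S_f_eq: "2 ^ n / real (card (perp n (S_f n f))) = real (card (S_f n f))"
proof -
  have "real (card (S_f n f)) * real (card (perp n (S_f n f))) = 2 ^ n"
    using card_S_f_perp[of n f] by (metis of_nat_mult of_nat_numeral of_nat_power)
  then show ?thesis
    using card_perp_pos[of n "S_f n f"] by (simp add: field_simps)
qed

lemma card_translate:
  assumes "S \<subseteq> bitstrings n" "y \<in> bitstrings n"
  shows "card {x \<in> bitstrings n. xor_bits x y \<in> S} = card S"
proof (rule bij_betw_same_card[of "\<lambda>x. xor_bits x y"])
  have involution: "xor_bits (xor_bits x y) y = x" if "x \<in> bitstrings n" for x
    using that assms(2) by (auto simp: xor_bits_def bitstrings_def intro!: nth_equalityI)
  show "bij_betw (\<lambda>x. xor_bits x y) {x \<in> bitstrings n. xor_bits x y \<in> S} S"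
  proof (rule bij_betw_byWitness[where f' = "\<lambda>x. xor_bits x y"])
    show "\<forall>x\<in>{x \<in> bitstrings n. xor_bits x y \<in> S}. xor_bits (xor_bits x y) y = x"
      using involution by simp
    show "\<forall>s\<in>S. xor_bits (xor_bits s y) y = s"
      using involution assms(1) by auto
    show "(\<lambda>x. xor_bits x y) ` {x \<in> bitstrings n. xor_bits x y \<in> S} \<subseteq> S"
      by auto
    show "(\<lambda>x. xor_bits x y) ` S \<subseteq> {x \<in> bitstrings n. xor_bits x y \<in> S}"
      using involution assms by auto
  qed
qed

lemma covering_radius_le:
  assumes "C \<subseteq> bitstrings n" "C \<noteq> {}" "x \<in> bitstrings n" "\<forall>c\<in>C. hamming x c \<le> k"
  shows "covering_radius n C \<le> k"
proof -
  have "finite C"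
    using finite_subset[OF assms(1) finite_bitstrings] .
  have "covering_radius n C \<le> Max (hamming x ` C)"
    unfolding covering_radius_def using assms(3) by (intro Min_le) auto
  also have "\<dots> \<le> k"
    using \<open>finite C\<close> assms(2,4) by simp
  finally show ?thesis .
qed

lemma covering_radius_attained:
  assumes "C \<subseteq> bitstrings n" "C \<noteq> {}"
  shows "\<exists>x\<in>bitstrings n. \<forall>c\<in>C. hamming x c \<le> covering_radius n C"
proof -
  have "covering_radius n C \<in> (\<lambda>x. Max (hamming x ` C)) ` bitstrings n"
    unfolding covering_radius_def using zeros_in_bitstrings[of n] by (intro Min_in) auto
  then obtain x where "x \<in> bitstrings n" "covering_radius n C = Max (hamming x ` C)"
    by blast
  moreover have "finite C"
    using finite_subset[OF assms(1) finite_bitstrings] .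
  ultimately show ?thesis
    by (metis Max_ge finite_imageI image_eqI)
qed

section \<open>Quadratic forms and two-outcome measurements\<close>

lemma cnj_mult_self: "cnj z * z = complex_of_real ((cmod z)\<^sup>2)"
  by (simp only: complex_norm_square mult.commute)

lemma cinner_self: "cinner A v v = complex_of_real (\<Sum>j\<in>A. (cmod (v j))\<^sup>2)"
  by (simp add: cinner_def cnj_mult_self)

lemma quadratic_form_add:
  "cinner A (\<lambda>j. v j + c * w j) (mat_app A M (\<lambda>j. v j + c * w j))
     = cinner A v (mat_app A M v) + c * cinner A v (mat_app A M w)
       + cnj c * cinner A w (mat_app A M v) + cnj c * c * cinner A w (mat_app A M w)"
  by (simp add: cinner_def mat_app_def sum.distrib sum_distrib_left algebra_simps)

lemma linear_term_zero:
  fixes r q :: real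
  assumes "\<And>t. t * r + t\<^sup>2 * q \<ge> 0" "q \<ge> 0"
  shows "r = 0"
proof (rule ccontr)
  assume "r \<noteq> 0"
  define t where "t = - r / (q + 1)"
  have "t * (q + 1) = - r"
    using assms(2) by (simp add: t_def)
  have "(q + 1)\<^sup>2 * (t * r + t\<^sup>2 * q) = (t * (q + 1)) * r * (q + 1) + (t * (q + 1))\<^sup>2 * q"
    by (simp add: algebra_simps power2_eq_square)
  also have "\<dots> = - r\<^sup>2"
    unfolding \<open>t * (q + 1) = - r\<close> by (simp add: algebra_simps power2_eq_square)
  finally have "(q + 1)\<^sup>2 * (t * r + t\<^sup>2 * q) = - r\<^sup>2" .
  moreover have "(q + 1)\<^sup>2 * (t * r + t\<^sup>2 * q) \<ge> 0"
    using assms by simp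
  ultimately show False
    using \<open>r \<noteq> 0\<close> by simp
qed

lemma psd_null_vector:
  assumes "psd A M" "cinner A v (mat_app A M v) = 0"
  shows "cinner A v (mat_app A M w) = 0 \<and> cinner A w (mat_app A M v) = 0"
proof -
  define a where "a = cinner A v (mat_app A M w)"
  define b where "b = cinner A w (mat_app A M v)"
  define q where "q = cinner A w (mat_app A M w)"
  have expand: "cinner A (\<lambda>j. v j + c * w j) (mat_app A M (\<lambda>j. v j + c * w j))
      = c * a + cnj c * b + cnj c * c * q" for c
    using quadratic_form_add[of A v c w M] assms(2) unfolding a_def b_def q_def by simp
  have form: "Im (c * a + cnj c * b + cnj c * c * q) = 0 \<and> Re (c * a + cnj c * b + cnj c * c * q) \<ge> 0" for c
    using assms(1) unfolding psd_def expand[symmetric] by blast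
  have q: "Im q = 0" "Re q \<ge> 0"
    using assms(1) unfolding psd_def q_def by auto
  have "t * (Re a + Re b) + t\<^sup>2 * Re q \<ge> 0" for t
    using form[of "complex_of_real t"] q by (simp add: algebra_simps power2_eq_square)
  then have re: "Re a + Re b = 0"
    using linear_term_zero q(2) by blast
  have "t * (Im b - Im a) + t\<^sup>2 * Re q \<ge> 0" for t
    using form[of "\<i> * complex_of_real t"] q by (simp add: algebra_simps power2_eq_square)
  then have im: "Im b - Im a = 0"
    using linear_term_zero q(2) by blast
  have "Im a + Im b = 0" "Re a - Re b = 0"
    using form[of 1] form[of "\<i>"] q by (simp_all add: algebra_simps)
  then show ?thesis
    using re im by (simp add: a_def[symmetric] b_def[symmetric] complex_eq_iff)
qed

lemma cinner_identity_minus: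
  assumes "finite A"
  shows "cinner A u (mat_app A (\<lambda>j l. (if j = l then 1 else 0) - E j l) v)
       = cinner A u v - cinner A u (mat_app A E v)"
proof -
  have "mat_app A (\<lambda>j l. (if j = l then 1 else 0) - E j l) v j = v j - mat_app A E v j"
    if "j \<in> A" for j
  proof -
    have "(\<Sum>l\<in>A. ((if j = l then 1 else 0) - E j l) * v l)
        = (\<Sum>l\<in>A. (if j = l then v l else 0) - E j l * v l)"
      by (intro sum.cong refl) (simp add: left_diff_distrib)
    also have "\<dots> = (\<Sum>l\<in>A. (if j = l then v l else 0)) - (\<Sum>l\<in>A. E j l * v l)"
      by (rule sum_subtractf)
    finally show ?thesis
      using assms that by (simp add: mat_app_def)
  qed
  then show ?thesis
    by (simp add: cinner_def sum_subtractf right_diff_distrib)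
qed

lemma distinguishable_orthogonal:
  assumes "finite A" "psd A E" "psd A (\<lambda>j l. (if j = l then 1 else 0) - E j l)"
    and "cinner A u u = 1" "cinner A u (mat_app A E u) = 1" "cinner A w (mat_app A E w) = 0"
  shows "cinner A w u = 0"
proof -
  have "cinner A u (mat_app A (\<lambda>j l. (if j = l then 1 else 0) - E j l) u) = 0"
    using assms by (simp add: cinner_identity_minus)
  then have "cinner A w (mat_app A (\<lambda>j l. (if j = l then 1 else 0) - E j l) u) = 0"
    using psd_null_vector[OF assms(3)] by blast
  moreover have "cinner A w (mat_app A E u) = 0"
    using psd_null_vector[OF assms(2,6)] by blast
  ultimately show ?thesis
    using cinner_identity_minus[OF assms(1)] by simp
qed

lemma quadratic_form_rank_one_sum:
  "cinner A v (mat_app A (\<lambda>j l. complex_of_real k * (\<Sum>x\<in>B. \<phi> x j * cnj (\<phi> x l))) v)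
    = complex_of_real (k * (\<Sum>x\<in>B. (cmod (cinner A (\<phi> x) v))\<^sup>2))"
proof -
  have apply_form: "mat_app A (\<lambda>j l. complex_of_real k * (\<Sum>x\<in>B. \<phi> x j * cnj (\<phi> x l))) v
      = (\<lambda>j. complex_of_real k * (\<Sum>x\<in>B. \<phi> x j * cinner A (\<phi> x) v))"
  proof
    fix j
    have "mat_app A (\<lambda>j l. complex_of_real k * (\<Sum>x\<in>B. \<phi> x j * cnj (\<phi> x l))) v j
        = (\<Sum>l\<in>A. \<Sum>x\<in>B. complex_of_real k * (\<phi> x j * (cnj (\<phi> x l) * v l)))"
      unfolding mat_app_def by (simp add: sum_distrib_left sum_distrib_right mult.assoc)
    also have "\<dots> = (\<Sum>x\<in>B. \<Sum>l\<in>A. complex_of_real k * (\<phi> x j * (cnj (\<phi> x l) * v l)))"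
      by (rule sum.swap)
    finally show "mat_app A (\<lambda>j l. complex_of_real k * (\<Sum>x\<in>B. \<phi> x j * cnj (\<phi> x l))) v j
        = complex_of_real k * (\<Sum>x\<in>B. \<phi> x j * cinner A (\<phi> x) v)"
      unfolding cinner_def by (simp add: sum_distrib_left)
  qed
  have "cinner A v (mat_app A (\<lambda>j l. complex_of_real k * (\<Sum>x\<in>B. \<phi> x j * cnj (\<phi> x l))) v)
      = (\<Sum>j\<in>A. \<Sum>x\<in>B. complex_of_real k * (cinner A (\<phi> x) v * (cnj (v j) * \<phi> x j)))"
    unfolding apply_form cinner_def[of A v] by (simp add: sum_distrib_left mult_ac)
  also have "\<dots> = (\<Sum>x\<in>B. complex_of_real k * (cinner A (\<phi> x) v * cnj (cinner A (\<phi> x) v)))"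
    by (subst sum.swap) (simp add: cinner_def[of A "\<phi> _" v] sum_distrib_left mult_ac)
  also have "\<dots> = complex_of_real (k * (\<Sum>x\<in>B. (cmod (cinner A (\<phi> x) v))\<^sup>2))"
    by (simp only: complex_norm_square of_real_mult of_real_sum sum_distrib_left)
  finally show ?thesis .
qed

section \<open>Query lists and their parity sets\<close>

lemma finite_basis_idx: "finite (basis_idx n k m)"
proof (rule finite_subset)
  show "basis_idx n k m \<subseteq> {xs. set xs \<subseteq> {..n} \<and> length xs = k} \<times> {..<m}"
    by (auto simp: basis_idx_def)
  show "finite ({xs. set xs \<subseteq> {..n} \<and> length xs = k} \<times> {..<m})"
    by (intro finite_cartesian_product finite_lists_length_eq) auto
qed

(* The coordinates (0-based) queried an odd number of times in a query list;
   index 0 is the dummy query x_0 = 0. *)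
definition query_parity :: "nat \<Rightarrow> nat list \<Rightarrow> nat set" where
  "query_parity n is = {i. i < n \<and> odd (count_list is (Suc i))}"

lemma query_parity_subset: "query_parity n is \<subseteq> {..<n}"
  by (auto simp: query_parity_def)

lemma finite_query_parity [simp]: "finite (query_parity n is)"
  using finite_subset[OF query_parity_subset] by simp

lemma card_query_parity: "card (query_parity n is) \<le> length is"
proof -
  have "query_parity n is \<subseteq> (\<lambda>a. a - 1) ` set is"
  proof
    fix i assume "i \<in> query_parity n is"
    then have "count_list is (Suc i) \<noteq> 0"
      by (auto simp: query_parity_def intro: odd_pos)
    then have "Suc i \<in> set is"
      by (simp add: count_list_0_iff)
    then show "i \<in> (\<lambda>a. a - 1) ` set is"
      by (rule rev_image_eqI) simp
  qed
  then have "card (query_parity n is) \<le> card ((\<lambda>a. a - 1) ` set is)"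
    by (intro card_mono) auto
  also have "\<dots> \<le> length is"
    using card_image_le card_length le_trans by blast
  finally show ?thesis .
qed

lemma query_parity_Cons:
  "query_parity n (a # is)
     = (if 1 \<le> a \<and> a \<le> n then sym_diff (query_parity n is) {a - 1} else query_parity n is)"
  by (auto simp: query_parity_def intro: odd_pos)

lemma query_sign_prod:
  assumes "length x = n" "\<forall>i\<in>set is. i \<le> n"
  shows "(\<Prod>i\<leftarrow>is. query_sign x i) = complex_of_real (chi (supp x) (query_parity n is))"
  using assms(2)
proof (induction "is")
  case Nil
  then show ?case
    by (simp add: query_parity_def)
next
  case (Cons a "is")
  then have IH: "(\<Prod>i\<leftarrow>is. query_sign x i) = complex_of_real (chi (supp x) (query_parity n is))"
    by simp
  show ?case
  proof (cases "a = 0")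
    case True
    then show ?thesis
      using IH by (simp add: query_parity_Cons query_sign_def)
  next
    case False
    then have a: "1 \<le> a \<and> a \<le> n"
      using Cons.prems by simp
    then have "query_sign x a = complex_of_real (chi (supp x) {a - 1})"
      using False assms(1) by (auto simp: query_sign_def chi_def supp_def)
    then show ?thesis
      using IH a by (simp add: query_parity_Cons chi_sym_diff mult.commute)
  qed
qed

lemma oracle_apply_basis:
  assumes "x \<in> bitstrings n" "j \<in> basis_idx n k m"
  shows "oracle_apply x \<psi> j = complex_of_real (chi (supp x) (query_parity n (fst j))) * \<psi> j"
proof -
  obtain "is" w where j: "j = (is, w)" "\<forall>i\<in>set is. i \<le> n"
    using assms(2) by (cases j) (auto simp: basis_idx_def)
  then show ?thesis
    using assms(1) query_sign_prod[of x n "is"] by (simp add: oracle_apply_def bitstrings_def)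
qed

(* A query list of length r with prescribed parity set D (|D| \<le> r), padded with x_0. *)
definition query_list :: "nat \<Rightarrow> nat set \<Rightarrow> nat list" where
  "query_list r D = map Suc (sorted_list_of_set D) @ replicate (r - card D) 0"

lemma count_list_distinct: "distinct xs \<Longrightarrow> count_list xs x = (if x \<in> set xs then 1 else 0)"
  by (induction xs) auto

lemma query_parity_query_list:
  assumes "D \<subseteq> {..<n}"
  shows "query_parity n (query_list r D) = D"
proof -
  have "finite D"
    using assms finite_subset by auto
  then have "count_list (query_list r D) (Suc i) = (if i \<in> D then 1 else 0)" for i
    by (simp add: query_list_def count_list_map_conv count_list_distinct)
  then show ?thesis
    using assms by (auto simp: query_parity_def)
qed

lemma query_list_in_basis:
  assumes "D \<subseteq> {..<n}" "card D \<le> r"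
  shows "(query_list r D, 0) \<in> basis_idx n r 1"
proof -
  have "finite D"
    using assms finite_subset by auto
  then show ?thesis
    using assms by (auto simp: basis_idx_def query_list_def)
qed

section \<open>Lower bound\<close>

definition parity_weight ::
    "nat \<Rightarrow> nat \<Rightarrow> nat \<Rightarrow> (nat list \<times> nat \<Rightarrow> complex) \<Rightarrow> nat set \<Rightarrow> real" where
  "parity_weight n k m \<psi> Y = (\<Sum>j\<in>{j \<in> basis_idx n k m. query_parity n (fst j) = Y}. (cmod (\<psi> j))\<^sup>2)"

lemma parity_weight_nonneg: "parity_weight n k m \<psi> Y \<ge> 0"
  by (simp add: parity_weight_def sum_nonneg)

lemma parity_weight_regroup:
  "(\<Sum>Y\<in>Pow {..<n}. parity_weight n k m \<psi> Y * g Y)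
     = (\<Sum>j\<in>basis_idx n k m. (cmod (\<psi> j))\<^sup>2 * g (query_parity n (fst j)))"
proof -
  have "(\<Sum>Y\<in>Pow {..<n}. parity_weight n k m \<psi> Y * g Y)
      = (\<Sum>Y\<in>Pow {..<n}. \<Sum>j\<in>{j \<in> basis_idx n k m. query_parity n (fst j) = Y}.
           (cmod (\<psi> j))\<^sup>2 * g (query_parity n (fst j)))"
    by (simp add: parity_weight_def sum_distrib_right)
  also have "\<dots> = (\<Sum>j\<in>basis_idx n k m. (cmod (\<psi> j))\<^sup>2 * g (query_parity n (fst j)))"
    using query_parity_subset by (intro sum.group finite_basis_idx) auto
  finally show ?thesis .
qed

lemma parity_weight_total: "(\<Sum>Y\<in>Pow {..<n}. parity_weight n k m \<psi> Y) = Re (cinner (basis_idx n k m) \<psi> \<psi>)"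
  using parity_weight_regroup[where g = "\<lambda>_. 1"] by (simp add: cinner_self)

lemma parity_weight_pos_card:
  assumes "parity_weight n k m \<psi> Y > 0"
  shows "card Y \<le> k"
proof -
  have "{j \<in> basis_idx n k m. query_parity n (fst j) = Y} \<noteq> {}"
  proof
    assume empty: "{j \<in> basis_idx n k m. query_parity n (fst j) = Y} = {}"
    have "parity_weight n k m \<psi> Y = 0"
      unfolding parity_weight_def empty by simp
    then show False
      using assms by simp
  qed
  then obtain j where "j \<in> basis_idx n k m" "query_parity n (fst j) = Y"
    by blast
  then show ?thesis
    using card_query_parity[of n "fst j"] by (auto simp: basis_idx_def)
qed

lemma oracle_inner_product:
  assumes "x \<in> bitstrings n" "y \<in> bitstrings n"
  shows "cinner (basis_idx n k m) (oracle_apply x \<psi>) (oracle_apply y \<psi>)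
       = complex_of_real (\<Sum>Y\<in>Pow {..<n}. parity_weight n k m \<psi> Y * chi (sym_diff (supp x) (supp y)) Y)"
proof -
  have "cnj (oracle_apply x \<psi> j) * oracle_apply y \<psi> j
      = complex_of_real ((cmod (\<psi> j))\<^sup>2 * chi (sym_diff (supp x) (supp y)) (query_parity n (fst j)))"
    if "j \<in> basis_idx n k m" for j
  proof -
    have "cnj (oracle_apply x \<psi> j) * oracle_apply y \<psi> j
        = complex_of_real (chi (supp x) (query_parity n (fst j)) * chi (supp y) (query_parity n (fst j)))
          * (cnj (\<psi> j) * \<psi> j)"
      using oracle_apply_basis[OF assms(1) that] oracle_apply_basis[OF assms(2) that] by simp
    then show ?thesis
      by (simp add: cnj_mult_self chi_sym_diff_left)
  qed
  then show ?thesis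
    unfolding cinner_def parity_weight_regroup of_real_sum by (rule sum.cong[OF refl])
qed

context
  fixes n k m :: nat and \<psi> :: "nat list \<times> nat \<Rightarrow> complex"
    and E :: "nat list \<times> nat \<Rightarrow> nat list \<times> nat \<Rightarrow> complex" and f :: "bool list \<Rightarrow> bool"
  assumes normalized: "cinner (basis_idx n k m) \<psi> \<psi> = 1"
    and effect_psd: "psd (basis_idx n k m) E"
    and complement_psd: "psd (basis_idx n k m) (\<lambda>j l. (if j = l then 1 else 0) - E j l)"
    and exact: "\<forall>x\<in>bitstrings n. cinner (basis_idx n k m) (oracle_apply x \<psi>)
                 (mat_app (basis_idx n k m) E (oracle_apply x \<psi>)) = (if f x then 1 else 0)"
begin

lemma parity_weight_sum_one: "(\<Sum>Y\<in>Pow {..<n}. parity_weight n k m \<psi> Y) = 1"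
  using normalized by (simp add: parity_weight_total)

lemma oracle_state_normalized:
  assumes "x \<in> bitstrings n"
  shows "cinner (basis_idx n k m) (oracle_apply x \<psi>) (oracle_apply x \<psi>) = 1"
  using oracle_inner_product[OF assms assms] parity_weight_sum_one by (simp del: of_real_sum)

(* Exactness: for Z outside the period group there are x, y with supports differing
   by Z and f x \<noteq> f y; their oracle states are orthogonal. *)
lemma parity_spectrum_vanishes:
  assumes "Z \<subseteq> {..<n}" "Z \<notin> period_group n f"
  shows "(\<Sum>Y\<in>Pow {..<n}. parity_weight n k m \<psi> Y * chi Z Y) = 0"
proof -
  obtain u v where uv: "u \<in> bitstrings n" "v \<in> bitstrings n" "f u" "\<not> f v"
      "sym_diff (supp v) (supp u) = Z"
    using non_period_witness[OF assms] .
  have "cinner (basis_idx n k m) (oracle_apply u \<psi>) (mat_app (basis_idx n k m) E (oracle_apply u \<psi>)) = 1"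
    "cinner (basis_idx n k m) (oracle_apply v \<psi>) (mat_app (basis_idx n k m) E (oracle_apply v \<psi>)) = 0"
    using exact uv(1-4) by simp_all
  then have "cinner (basis_idx n k m) (oracle_apply v \<psi>) (oracle_apply u \<psi>) = 0"
    by (rule distinguishable_orthogonal[OF finite_basis_idx effect_psd complement_psd
          oracle_state_normalized[OF uv(1)]])
  then have "complex_of_real (\<Sum>Y\<in>Pow {..<n}. parity_weight n k m \<psi> Y * chi Z Y) = 0"
    using oracle_inner_product[OF uv(2,1), of k m \<psi>] unfolding uv(5) by (simp only:)
  then show ?thesis
    by (simp only: of_real_eq_0_iff)
qed

(* Any parity set of positive weight is a centre within distance k of the dual code,
   by translation invariance of the parity weights. *)
lemma exact_algorithm_center:
  "\<exists>Y0\<subseteq>{..<n}. \<forall>c\<in>perp n (S_f n f). card (sym_diff Y0 (supp c)) \<le> k"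
proof -
  obtain Y0 where Y0: "Y0 \<subseteq> {..<n}" "parity_weight n k m \<psi> Y0 > 0"
  proof -
    have "\<exists>Y\<in>Pow {..<n}. parity_weight n k m \<psi> Y \<noteq> 0"
    proof (rule ccontr)
      assume "\<not> (\<exists>Y\<in>Pow {..<n}. parity_weight n k m \<psi> Y \<noteq> 0)"
      then have "(\<Sum>Y\<in>Pow {..<n}. parity_weight n k m \<psi> Y) = 0"
        by simp
      then show False
        using parity_weight_sum_one by simp
    qed
    then obtain Y where "Y \<subseteq> {..<n}" "parity_weight n k m \<psi> Y \<noteq> 0"
      by blast
    then show ?thesis
      using that parity_weight_nonneg[of n k m \<psi> Y] by simp
  qed
  have bound: "card (sym_diff Y0 (supp c)) \<le> k" if "c \<in> perp n (S_f n f)" for c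
  proof (rule parity_weight_pos_card)
    have "supp c \<in> dual {..<n} (period_group n f)"
      using that supp_perp[OF S_f_subset, of n f] unfolding period_group_def by (metis image_eqI)
    then have "parity_weight n k m \<psi> (sym_diff Y0 (supp c)) = parity_weight n k m \<psi> Y0"
      by (rule invariant_under_dual[OF finite_lessThan Y0(1)]) (rule parity_spectrum_vanishes)
    then show "parity_weight n k m \<psi> (sym_diff Y0 (supp c)) > 0"
      using Y0(2) by simp
  qed
  show ?thesis
    using Y0(1) bound by auto
qed

end

lemma lower_bound:
  assumes "na_exact_computes n f k"
  shows "covering_radius n (perp n (S_f n f)) \<le> k"
proof -
  obtain m \<psi> E where algorithm:
      "cinner (basis_idx n k m) \<psi> \<psi> = 1" "psd (basis_idx n k m) E"
      "psd (basis_idx n k m) (\<lambda>j l. (if j = l then 1 else 0) - E j l)"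
      "\<forall>x\<in>bitstrings n. cinner (basis_idx n k m) (oracle_apply x \<psi>)
         (mat_app (basis_idx n k m) E (oracle_apply x \<psi>)) = (if f x then 1 else 0)"
    using assms unfolding na_exact_computes_def Let_def by blast
  obtain Y0 where Y0: "Y0 \<subseteq> {..<n}" "\<forall>c\<in>perp n (S_f n f). card (sym_diff Y0 (supp c)) \<le> k"
    using exact_algorithm_center[OF algorithm] by auto
  have hamming_bound: "hamming (bits_of n Y0) c \<le> k" if "c \<in> perp n (S_f n f)" for c
  proof -
    have "length c = n"
      using that by (simp add: perp_def bitstrings_def)
    then show ?thesis
      using that Y0 by (simp add: hamming_supp supp_bits_of)
  qed
  moreover have "perp n (S_f n f) \<noteq> {}"
    using zeros_in_perp by auto
  ultimately show ?thesis
    by (intro covering_radius_le[OF perp_subset _ bits_of_in_bitstrings[of n Y0]]) auto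
qed

section \<open>Upper bound\<close>

context
  fixes n r :: nat and f :: "bool list \<Rightarrow> bool" and Y0 :: "nat set"
  assumes center_subset: "Y0 \<subseteq> {..<n}"
    and within_radius: "\<forall>c\<in>perp n (S_f n f). card (sym_diff Y0 (supp c)) \<le> r"
begin

definition query_index :: "bool list \<Rightarrow> nat list \<times> nat" where
  "query_index c = (query_list r (sym_diff Y0 (supp c)), 0)"

(* The uniform superposition over the dual code, encoded by these basis states. *)
definition start_state :: "nat list \<times> nat \<Rightarrow> complex" where
  "start_state j = (if j \<in> query_index ` perp n (S_f n f)
     then complex_of_real (1 / sqrt (real (card (perp n (S_f n f))))) else 0)"

definition accept_effect :: "nat list \<times> nat \<Rightarrow> nat list \<times> nat \<Rightarrow> complex" where
  "accept_effect = (\<lambda>j l. complex_of_real (1 / real (card (S_f n f))) *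
     (\<Sum>x\<in>{x \<in> bitstrings n. f x}. oracle_apply x start_state j * cnj (oracle_apply x start_state l)))"

lemma sym_diff_center_subset: "c \<in> bitstrings n \<Longrightarrow> sym_diff Y0 (supp c) \<subseteq> {..<n}"
  using center_subset supp_subset by blast

lemma query_index_in_basis:
  assumes "c \<in> perp n (S_f n f)"
  shows "query_index c \<in> basis_idx n r 1"
proof -
  have "c \<in> bitstrings n"
    using assms by (simp add: perp_def)
  then show ?thesis
    unfolding query_index_def
    using within_radius assms by (intro query_list_in_basis sym_diff_center_subset) auto
qed

lemma query_parity_query_index:
  "c \<in> bitstrings n \<Longrightarrow> query_parity n (fst (query_index c)) = sym_diff Y0 (supp c)"
  using query_parity_query_list[OF sym_diff_center_subset] by (simp add: query_index_def)

lemma inj_query_index: "inj_on query_index (perp n (S_f n f))"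
proof (rule inj_onI)
  fix c c' assume cc': "c \<in> perp n (S_f n f)" "c' \<in> perp n (S_f n f)" "query_index c = query_index c'"
  then have c: "c \<in> bitstrings n" "c' \<in> bitstrings n"
    by (simp_all add: perp_def)
  then have "sym_diff Y0 (supp c) = sym_diff Y0 (supp c')"
    using query_parity_query_index cc'(3) by metis
  then have "supp c = supp c'"
    by blast
  then show "c = c'"
    using c supp_inj by (auto dest: inj_onD)
qed

lemma sum_over_start_support:
  assumes "\<And>j. j \<in> basis_idx n r 1 \<Longrightarrow> j \<notin> query_index ` perp n (S_f n f) \<Longrightarrow> F j = 0"
  shows "(\<Sum>j\<in>basis_idx n r 1. F j) = (\<Sum>c\<in>perp n (S_f n f). F (query_index c))"
proof -
  have "(\<Sum>j\<in>basis_idx n r 1. F j) = (\<Sum>j\<in>query_index ` perp n (S_f n f). F j)"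
    using assms query_index_in_basis by (intro sum.mono_neutral_right finite_basis_idx) auto
  also have "\<dots> = (\<Sum>c\<in>perp n (S_f n f). F (query_index c))"
    by (rule sum.reindex[OF inj_query_index, unfolded comp_def])
  finally show ?thesis .
qed

lemma oracle_start_state:
  assumes "x \<in> bitstrings n"
  shows "oracle_apply x start_state j
       = (if j \<in> query_index ` perp n (S_f n f)
          then complex_of_real (chi (supp x) (query_parity n (fst j)) / sqrt (real (card (perp n (S_f n f)))))
          else 0)"
proof (cases "j \<in> query_index ` perp n (S_f n f)")
  case True
  then have "j \<in> basis_idx n r 1"
    using query_index_in_basis by auto
  then show ?thesis
    using True oracle_apply_basis[OF assms] by (simp add: start_state_def)
next
  case False
  then show ?thesis
    by (cases j) (simp add: oracle_apply_def start_state_def)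
qed

lemma cinner_oracle_start_state:
  assumes "x \<in> bitstrings n"
  shows "cinner (basis_idx n r 1) (oracle_apply x start_state) v
       = (\<Sum>c\<in>perp n (S_f n f).
            complex_of_real (chi (supp x) (sym_diff Y0 (supp c)) / sqrt (real (card (perp n (S_f n f)))))
            * v (query_index c))"
  unfolding cinner_def
  by (subst sum_over_start_support)
     (auto simp: oracle_start_state[OF assms] query_parity_query_index perp_def)

lemma amplitude_square:
  "1 / sqrt (real (card (perp n (S_f n f)))) * (1 / sqrt (real (card (perp n (S_f n f)))))
     = 1 / real (card (perp n (S_f n f)))"
  by simp

lemma start_state_normalized: "cinner (basis_idx n r 1) start_state start_state = 1"
proof -
  let ?C = "perp n (S_f n f)"
  have "cnj (start_state (query_index c)) * start_state (query_index c)
      = complex_of_real (1 / real (card ?C))" if "c \<in> ?C" for c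
    using that by (simp only: start_state_def if_P[OF imageI[OF that]] complex_cnj_complex_of_real
        of_real_mult[symmetric] amplitude_square)
  then have "cinner (basis_idx n r 1) start_state start_state = (\<Sum>c\<in>?C. complex_of_real (1 / real (card ?C)))"
    unfolding cinner_def by (subst sum_over_start_support) (auto simp: start_state_def)
  also have "\<dots> = 1"
    using card_perp_pos[of n "S_f n f"] by simp
  finally show ?thesis .
qed

lemma oracle_start_states_inner:
  assumes "x \<in> bitstrings n" "y \<in> bitstrings n"
  shows "cinner (basis_idx n r 1) (oracle_apply x start_state) (oracle_apply y start_state)
       = complex_of_real (if xor_bits x y \<in> S_f n f then chi (sym_diff (supp x) (supp y)) Y0 else 0)"
proof -
  let ?C = "perp n (S_f n f)"
  let ?Z = "sym_diff (supp x) (supp y)"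
  let ?a = "1 / sqrt (real (card ?C))"
  have Z: "supp (xor_bits x y) = ?Z"
    using assms by (simp add: supp_xor bitstrings_def)
  have "cinner (basis_idx n r 1) (oracle_apply x start_state) (oracle_apply y start_state)
      = (\<Sum>c\<in>?C. complex_of_real (chi ?Z Y0 / real (card ?C) * chi (supp (xor_bits x y)) (supp c)))"
    unfolding cinner_oracle_start_state[OF assms(1)]
  proof (rule sum.cong[OF refl])
    fix c assume c: "c \<in> ?C"
    then have "oracle_apply y start_state (query_index c)
        = complex_of_real (chi (supp y) (sym_diff Y0 (supp c)) * ?a)"
      using oracle_start_state[OF assms(2)] query_parity_query_index by (simp add: perp_def)
    moreover have "chi (supp x) (sym_diff Y0 (supp c)) * chi (supp y) (sym_diff Y0 (supp c))
        = chi ?Z Y0 * chi (supp (xor_bits x y)) (supp c)"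
      using center_subset by (simp add: Z chi_sym_diff_left chi_sym_diff finite_subset)
    ultimately show "complex_of_real (chi (supp x) (sym_diff Y0 (supp c)) / sqrt (real (card ?C)))
          * oracle_apply y start_state (query_index c)
        = complex_of_real (chi ?Z Y0 / real (card ?C) * chi (supp (xor_bits x y)) (supp c))"
      by (simp only: of_real_mult[symmetric]) (simp add: amplitude_square[symmetric])
  qed
  also have "\<dots> = complex_of_real (chi ?Z Y0 / real (card ?C) * (\<Sum>c\<in>?C. chi (supp (xor_bits x y)) (supp c)))"
    by (simp only: of_real_sum sum_distrib_left)
  also have "\<dots> = complex_of_real (if xor_bits x y \<in> S_f n f then chi ?Z Y0 else 0)"
    using card_perp_pos[of n "S_f n f"] assms by (simp add: perp_character_sum)
  finally show ?thesis .
qed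

(* Frame bound (via Parseval): the oracle states over all inputs have total overlap
   at most |S_f| * |v|^2 with any vector v. *)
lemma frame_bound:
  "(\<Sum>x\<in>bitstrings n. (cmod (cinner (basis_idx n r 1) (oracle_apply x start_state) v))\<^sup>2)
     \<le> real (card (S_f n f)) * (\<Sum>j\<in>basis_idx n r 1. (cmod (v j))\<^sup>2)"
proof -
  let ?C = "perp n (S_f n f)"
  let ?D = "\<lambda>c. sym_diff Y0 (supp c)"
  define a where "a c = v (query_index c) * complex_of_real (1 / sqrt (real (card ?C)))" for c
  have C: "finite ?C" "?D ` ?C \<subseteq> Pow {..<n}"
    using finite_subset[OF perp_subset finite_bitstrings] sym_diff_center_subset
    by (auto simp: perp_def)
  have "inj_on ?D ?C"
    using inj_query_index by (auto simp: inj_on_def query_index_def)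
  have "(\<Sum>x\<in>bitstrings n. (cmod (cinner (basis_idx n r 1) (oracle_apply x start_state) v))\<^sup>2)
      = (\<Sum>x\<in>bitstrings n. (cmod (\<Sum>c\<in>?C. complex_of_real (chi (supp x) (?D c)) * a c))\<^sup>2)"
  proof (rule sum.cong[OF refl])
    fix x assume "x \<in> bitstrings n"
    show "(cmod (cinner (basis_idx n r 1) (oracle_apply x start_state) v))\<^sup>2
        = (cmod (\<Sum>c\<in>?C. complex_of_real (chi (supp x) (?D c)) * a c))\<^sup>2"
      unfolding cinner_oracle_start_state[OF \<open>x \<in> bitstrings n\<close>]
      by (simp add: a_def mult_ac divide_inverse)
  qed
  also have "\<dots> = (\<Sum>X\<in>Pow {..<n}. (cmod (\<Sum>c\<in>?C. complex_of_real (chi X (?D c)) * a c))\<^sup>2)"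
    by (rule sum_bitstrings)
  also have "\<dots> = 2 ^ n * (\<Sum>c\<in>?C. (cmod (a c))\<^sup>2)"
    using parseval[OF finite_lessThan C(1) \<open>inj_on ?D ?C\<close>] C(2) by auto
  also have "\<dots> = 2 ^ n / real (card ?C) * (\<Sum>c\<in>?C. (cmod (v (query_index c)))\<^sup>2)"
  proof -
    have "(cmod (a c))\<^sup>2 = (cmod (v (query_index c)))\<^sup>2 / real (card ?C)" for c
      by (simp add: a_def norm_mult norm_divide power_mult_distrib power_divide)
    then show ?thesis
      by (simp add: sum_divide_distrib[symmetric])
  qed
  also have "2 ^ n / real (card ?C) = real (card (S_f n f))"
    by (rule card_S_f_eq)
  also have "(\<Sum>c\<in>?C. (cmod (v (query_index c)))\<^sup>2) = (\<Sum>j\<in>query_index ` ?C. (cmod (v j))\<^sup>2)"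
    by (simp add: sum.reindex[OF inj_query_index])
  also have "\<dots> \<le> (\<Sum>j\<in>basis_idx n r 1. (cmod (v j))\<^sup>2)"
    using query_index_in_basis by (intro sum_mono2 finite_basis_idx) auto
  finally show ?thesis
    by (simp add: mult_left_mono)
qed


lemma accept_effect_form:
  "cinner (basis_idx n r 1) v (mat_app (basis_idx n r 1) accept_effect v)
     = complex_of_real (1 / real (card (S_f n f))
         * (\<Sum>x\<in>{x \<in> bitstrings n. f x}. (cmod (cinner (basis_idx n r 1) (oracle_apply x start_state) v))\<^sup>2))"
  unfolding accept_effect_def by (rule quadratic_form_rank_one_sum)

lemma accept_effect_psd: "psd (basis_idx n r 1) accept_effect"
  unfolding psd_def accept_effect_form by (simp add: sum_nonneg)

(* I - E is positive semidefinite, by the frame bound. *)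
lemma accept_complement_psd:
  "psd (basis_idx n r 1) (\<lambda>j l. (if j = l then 1 else 0) - accept_effect j l)"
  unfolding psd_def
proof
  fix v
  let ?Q = "\<lambda>x. (cmod (cinner (basis_idx n r 1) (oracle_apply x start_state) v))\<^sup>2"
  have "(\<Sum>x\<in>{x \<in> bitstrings n. f x}. ?Q x) \<le> (\<Sum>x\<in>bitstrings n. ?Q x)"
    by (intro sum_mono2) auto
  also have "\<dots> \<le> real (card (S_f n f)) * (\<Sum>j\<in>basis_idx n r 1. (cmod (v j))\<^sup>2)"
    by (rule frame_bound)
  finally have bound: "1 / real (card (S_f n f)) * (\<Sum>x\<in>{x \<in> bitstrings n. f x}. ?Q x)
      \<le> (\<Sum>j\<in>basis_idx n r 1. (cmod (v j))\<^sup>2)"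
    using card_S_f_pos[of n f] by (simp add: field_simps)
  have "cinner (basis_idx n r 1) v (mat_app (basis_idx n r 1) (\<lambda>j l. (if j = l then 1 else 0) - accept_effect j l) v)
      = complex_of_real ((\<Sum>j\<in>basis_idx n r 1. (cmod (v j))\<^sup>2)
          - 1 / real (card (S_f n f)) * (\<Sum>x\<in>{x \<in> bitstrings n. f x}. ?Q x))"
    unfolding cinner_identity_minus[OF finite_basis_idx] cinner_self accept_effect_form
    by (simp only: of_real_diff)
  then show "Im (cinner (basis_idx n r 1) v (mat_app (basis_idx n r 1) (\<lambda>j l. (if j = l then 1 else 0) - accept_effect j l) v)) = 0
      \<and> Re (cinner (basis_idx n r 1) v (mat_app (basis_idx n r 1) (\<lambda>j l. (if j = l then 1 else 0) - accept_effect j l) v)) \<ge> 0"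
    using bound by (simp only: Im_complex_of_real Re_complex_of_real) simp
qed

lemma acceptance:
  assumes "y \<in> bitstrings n"
  shows "cinner (basis_idx n r 1) (oracle_apply y start_state)
           (mat_app (basis_idx n r 1) accept_effect (oracle_apply y start_state)) = (if f y then 1 else 0)"
proof -
  let ?T = "{x \<in> {x \<in> bitstrings n. f x}. xor_bits x y \<in> S_f n f}"
  have "(\<Sum>x\<in>{x \<in> bitstrings n. f x}.
          (cmod (cinner (basis_idx n r 1) (oracle_apply x start_state) (oracle_apply y start_state)))\<^sup>2)
      = (\<Sum>x\<in>{x \<in> bitstrings n. f x}. if xor_bits x y \<in> S_f n f then 1 else 0)"
  proof (rule sum.cong[OF refl])
    fix x assume "x \<in> {x \<in> bitstrings n. f x}"
    then have x: "x \<in> bitstrings n"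
      by simp
    show "(cmod (cinner (basis_idx n r 1) (oracle_apply x start_state) (oracle_apply y start_state)))\<^sup>2
        = (if xor_bits x y \<in> S_f n f then 1 else 0)"
      unfolding oracle_start_states_inner[OF x assms] by (simp add: power2_eq_square)
  qed
  also have "\<dots> = real (card ?T)"
    by (simp add: sum.inter_filter[symmetric])
  also have "card ?T = (if f y then card (S_f n f) else 0)"
  proof -
    have "f x = f y" if "x \<in> bitstrings n" "xor_bits x y \<in> S_f n f" for x
      using f_invariant[OF that(1) assms that(2)] .
    then have "?T = (if f y then {x \<in> bitstrings n. xor_bits x y \<in> S_f n f} else {})"
      by auto
    then show ?thesis
      using card_translate[OF S_f_subset assms] by simp
  qed
  finally show ?thesis
    unfolding accept_effect_form using card_S_f_pos[of n f] by simp
qed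

lemma center_algorithm: "na_exact_computes n f r"
  unfolding na_exact_computes_def Let_def
proof (intro exI conjI ballI)
  show "cinner (basis_idx n r 1) start_state start_state = 1"
    by (rule start_state_normalized)
  show "psd (basis_idx n r 1) accept_effect"
    by (rule accept_effect_psd)
  show "psd (basis_idx n r 1) (\<lambda>j l. (if j = l then 1 else 0) - accept_effect j l)"
    by (rule accept_complement_psd)
  fix x assume "x \<in> bitstrings n"
  then show "cinner (basis_idx n r 1) (oracle_apply x start_state)
      (mat_app (basis_idx n r 1) accept_effect (oracle_apply x start_state)) = (if f x then 1 else 0)"
    by (rule acceptance)
qed

end

theorem theorem7p2:
  fixes n :: nat and f :: "bool list \<Rightarrow> bool"
  shows "QE_na n f = covering_radius n (perp n (S_f n f))"
proof -
  let ?C = "perp n (S_f n f)"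
  obtain x where x: "x \<in> bitstrings n" "\<forall>c\<in>?C. hamming x c \<le> covering_radius n ?C"
    using covering_radius_attained[OF perp_subset] zeros_in_perp by blast
  have "\<forall>c\<in>?C. card (sym_diff (supp x) (supp c)) \<le> covering_radius n ?C"
    using x by (simp add: perp_def bitstrings_def hamming_supp)
  then have "na_exact_computes n f (covering_radius n ?C)"
    by (rule center_algorithm[OF supp_subset[OF x(1)]])
  then show ?thesis
    unfolding QE_na_def by (rule Least_equality) (rule lower_bound)
qed

end
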